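(* Let $G$ be the enhanced conflict graph of any traffic pattern in a multicast switch and let $k>1$. If $G$ has a set $S$ of $k$ pairwise non-adjacent vertices which all have a common neighbor $v$, then at least $k-1$ vertices of $S$ represent subflows from the same input as $v$.
   Context: A flow is $(i,J)$ with input $i$ and nonempty fanout set $J$ of outputs; a traffic pattern is a finite set of flows; subflows are $(i,J,j)$ with $j\in J$. Enhanced conflict graph: one vertex per subflow; distinct subflows $(i,J,j),(i',J',j')$ adjacent iff $j=j'$, or $i=i'$ and $J\ne J'$. *)

theory Defs
  imports Main
begin

definition traffic_pattern :: "('i \<times> 'o set) set \<Rightarrow> bool" where
  "traffic_pattern T \<longleftrightarrow> finite T \<and> (\<forall>(i, J) \<in> T. J \<noteq> {})"

definition subflows :: "('i \<times> 'o set) set \<Rightarrow> ('i \<times> 'o set \<times> 'o) set" where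
  "subflows T = {(i, J, j). (i, J) \<in> T \<and> j \<in> J}"

text \<open>Adjacency in the enhanced conflict graph (vertex set: subflows T).\<close>

definition ecg_adj :: "('i \<times> 'o set \<times> 'o) \<Rightarrow> ('i \<times> 'o set \<times> 'o) \<Rightarrow> bool" where
  "ecg_adj u w \<longleftrightarrow> u \<noteq> w \<and>
     (case u of (i, J, j) \<Rightarrow> case w of (i', J', j') \<Rightarrow>
        j = j' \<or> (i = i' \<and> J \<noteq> J'))"

end

theory Submission
  imports Defs
begin

text \<open>A neighbour of \<open>v\<close> from another input conflicts with \<open>v\<close> only through
the output, so all such neighbours share \<open>v\<close>'s output and hence conflict with each
other. An independent set of common neighbours therefore contains at most one of them.\<close>

lemma ecg_adj_other_input_same_output:
  assumes "ecg_adj v u" and "fst u \<noteq> fst v"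
  shows "snd (snd u) = snd (snd v)"
  using assms by (cases u; cases v) (auto simp: ecg_adj_def)

lemma ecg_adj_if_same_output:
  assumes "u \<noteq> w" and "snd (snd u) = snd (snd w)"
  shows "ecg_adj u w"
  using assms by (cases u; cases w) (auto simp: ecg_adj_def)

lemma card_other_input_common_neighbours_le_1:
  assumes "finite S"
    and indep: "\<forall>u\<in>S. \<forall>w\<in>S. \<not> ecg_adj u w"
    and nbrs: "\<forall>u\<in>S. ecg_adj v u"
  shows "card {u \<in> S. fst u \<noteq> fst v} \<le> 1"
proof -
  have "u = w" if "u \<in> S" "w \<in> S" "fst u \<noteq> fst v" "fst w \<noteq> fst v" for u w
  proof (rule ccontr)
    assume "u \<noteq> w"
    moreover have "snd (snd u) = snd (snd w)"
      using that nbrs ecg_adj_other_input_same_output by metis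
    ultimately show False
      using ecg_adj_if_same_output indep that(1,2) by blast
  qed
  then show ?thesis
    using \<open>finite S\<close> by (simp add: card_le_Suc0_iff_eq)
qed

theorem lemma3:
  fixes T :: "('i \<times> 'o set) set"
    and S :: "('i \<times> 'o set \<times> 'o) set"
    and v :: "'i \<times> 'o set \<times> 'o"
    and k :: nat
  assumes "traffic_pattern T"
    and "k > 1"
    and "S \<subseteq> subflows T" and "finite S" and "card S = k"
    and "\<forall>u\<in>S. \<forall>w\<in>S. \<not> ecg_adj u w"
    and "v \<in> subflows T"
    and "\<forall>u\<in>S. ecg_adj v u"
  shows "card {u \<in> S. fst u = fst v} \<ge> k - 1"
proof -
  have "card S = card {u \<in> S. fst u = fst v} + card {u \<in> S. fst u \<noteq> fst v}"
    using card_Int_Diff[OF \<open>finite S\<close>, of "{u. fst u = fst v}"]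
    by (simp add: Int_def set_diff_eq)
  moreover have "card {u \<in> S. fst u \<noteq> fst v} \<le> 1"
    using card_other_input_common_neighbours_le_1 assms(4,6,8) .
  ultimately show ?thesis
    using \<open>card S = k\<close> by linarith
qed

end
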